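(* In the synchronous $Q$-learning setting of the context, assume $|\mathcal S||\mathcal A|\ge2$ and let $Q^*$ be the unique fixed point of $\mathcal T$. (a) If $\epsilon_k\equiv\epsilon\le\frac{(1-\beta)^2}{640e\log(|\mathcal S||\mathcal A|)}$, then for all $k\ge0$, $\mathbb{E}[\|Q_k-Q^*\|_\infty^2]\le\frac32\|Q_0-Q^*\|_\infty^2\left[1-\frac{(1-\beta)\epsilon}{2}\right]^k+(1+2\|Q^*\|_\infty^2)\frac{256e\log(|\mathcal S||\mathcal A|)\epsilon}{(1-\beta)^2}$. (b) If $\epsilon_k=\epsilon/(k+K)$ with $\epsilon=\frac{4}{1-\beta}$ and $K=\frac{640e\log(|\mathcal S||\mathcal A|)}{(1-\beta)^3}$, then for all $k\ge0$, $\mathbb{E}[\|Q_k-Q^*\|_\infty^2]\le8192e^2(1+2\|Q^*\|_\infty^2+\|Q_0-Q^*\|_\infty^2)\frac{\log(|\mathcal S||\mathcal A|)}{(1-\beta)^3}\frac{1}{k+K}$.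
   Context: Finite MDP: finite state space $\mathcal S$, finite action space $\mathcal A$, transition matrices $P_a(s,s')$, reward $\mathcal R:\mathcal S\times\mathcal A\to[0,1]$, discount $\beta\in(0,1)$. The Bellman optimality operator on $Q\in\mathbb{R}^{|\mathcal S||\mathcal A|}$ is $[\mathcal T(Q)](s,a)=\mathcal R(s,a)+\beta\sum_{s'}P_a(s,s')\max_{a'}Q(s',a')$. Synchronous $Q$-learning: from deterministic $Q_0$, at each iteration $k$ and each $(s,a)$, a successor state $s'_{s,a}\sim P_a(s,\cdot)$ is sampled (independently of the past given the current iterate) and $Q_{k+1}(s,a)=Q_k(s,a)+\epsilon_k(\mathcal R(s,a)+\beta\max_{a'}Q_k(s'_{s,a},a')-Q_k(s,a))$. Logarithms are natural. *)

theory Defs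
  imports "HOL-Probability.Probability"
begin

text \<open>Q-functions are maps from state-action pairs to reals.
  Transition kernel: P a s is the distribution of the successor state P_a(s, .).\<close>

definition supnorm :: "('x::finite \<Rightarrow> real) \<Rightarrow> real" where
  "supnorm Q = Max (range (\<lambda>x. \<bar>Q x\<bar>))"

definition bellman ::
  "('s::finite \<Rightarrow> 'a::finite \<Rightarrow> real) \<Rightarrow> ('a \<Rightarrow> 's \<Rightarrow> 's pmf) \<Rightarrow> real
   \<Rightarrow> ('s \<times> 'a \<Rightarrow> real) \<Rightarrow> ('s \<times> 'a \<Rightarrow> real)" where
  "bellman R P \<beta> Q = (\<lambda>(s, a). R s a +
      \<beta> * (\<Sum>s'\<in>UNIV. pmf (P a s) s' * (MAX a'. Q (s', a'))))"

definition qstep ::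
  "('s::finite \<Rightarrow> 'a::finite \<Rightarrow> real) \<Rightarrow> real \<Rightarrow> real
   \<Rightarrow> ('s \<times> 'a \<Rightarrow> real) \<Rightarrow> ('s \<times> 'a \<Rightarrow> 's) \<Rightarrow> ('s \<times> 'a \<Rightarrow> real)" where
  "qstep R \<beta> e Q Y = (\<lambda>(s, a). Q (s, a) +
      e * (R s a + \<beta> * (MAX a'. Q (Y (s, a), a')) - Q (s, a)))"

text \<open>Law of the iterate Q_k: at each iteration, for each pair (s,a) a successor is sampled
  from P a s, independently across pairs and independently of the past given Q_k.\<close>
primrec qlearn ::
  "('s::finite \<Rightarrow> 'a::finite \<Rightarrow> real) \<Rightarrow> ('a \<Rightarrow> 's \<Rightarrow> 's pmf) \<Rightarrow> real
   \<Rightarrow> (nat \<Rightarrow> real) \<Rightarrow> ('s \<times> 'a \<Rightarrow> real) \<Rightarrow> nat \<Rightarrow> ('s \<times> 'a \<Rightarrow> real) pmf" where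
  "qlearn R P \<beta> eps Q0 0 = return_pmf Q0"
| "qlearn R P \<beta> eps Q0 (Suc k) =
     bind_pmf (qlearn R P \<beta> eps Q0 k)
       (\<lambda>Q. map_pmf (qstep R \<beta> (eps k) Q)
              (Pi_pmf UNIV undefined (\<lambda>(s, a). P a s)))"

end

theory Submission
  imports Defs
begin

text \<open>Split the error as \<open>Q_k - Q* = D_k + N_k\<close>. The noise \<open>N_k\<close> is the exponentially
  weighted average of the empirical Bellman errors \<open>R(s,a) + \<beta> max_a' Q*(s',a') - Q*(s,a)\<close>
  at the fixed point. These have mean zero and range \<open>2\<beta>\<parallel>Q*\<parallel>\<close>, and fresh successors are
  drawn at every step, so by Hoeffding's lemma every coordinate of \<open>N_k\<close> is sub-Gaussian with a
  variance proxy obeying \<open>V_(k+1) = (1 - \<epsilon>_k)^2 V_k + \<epsilon>_k^2 \<parallel>Q*\<parallel>^2\<close>; a maximal inequality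
  over the \<open>|S||A|\<close> coordinates then gives \<open>E \<parallel>N_k\<parallel>^2 \<le> 8 V_k log (|S||A|)\<close>. The remainder is
  controlled pathwise: the Bellman max is 1-Lipschitz in the sup norm, so
  \<open>\<parallel>D_(k+1)\<parallel> \<le> (1 - \<epsilon>_k (1 - \<beta>)) \<parallel>D_k\<parallel> + \<epsilon>_k \<beta> \<parallel>N_k\<parallel>\<close>, and convexity bounds the mean square
  of this scalar recursion. Both rates follow by solving the scalar recursions for the two
  step-size schedules.\<close>

lemma abs_le_supnorm: "\<bar>Q x\<bar> \<le> supnorm (Q :: 'x::finite \<Rightarrow> real)"
  unfolding supnorm_def by (rule Max_ge) auto

lemma supnorm_leI: "(\<And>x. \<bar>Q x\<bar> \<le> c) \<Longrightarrow> supnorm (Q :: 'x::finite \<Rightarrow> real) \<le> c"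
  unfolding supnorm_def by (rule Max.boundedI) auto

lemma supnorm_nonneg: "0 \<le> supnorm (Q :: 'x::finite \<Rightarrow> real)"
  using abs_le_supnorm[of Q undefined] by linarith

lemma supnorm_attained: "\<exists>x. supnorm (Q :: 'x::finite \<Rightarrow> real) = \<bar>Q x\<bar>"
proof -
  have "supnorm Q \<in> range (\<lambda>x. \<bar>Q x\<bar>)" unfolding supnorm_def by (rule Max_in) auto
  thus ?thesis by auto
qed

lemma supnorm_le_diff_add:
  fixes f g :: "'x::finite \<Rightarrow> real"
  shows "supnorm f \<le> supnorm (\<lambda>x. f x - g x) + supnorm g"
proof (rule supnorm_leI)
  fix x
  show "\<bar>f x\<bar> \<le> supnorm (\<lambda>x. f x - g x) + supnorm g"
    using abs_le_supnorm[of "\<lambda>x. f x - g x" x] abs_le_supnorm[of g x] by simp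
qed

lemma abs_Max_diff_le:
  fixes f g :: "'a::finite \<Rightarrow> real"
  assumes "\<And>a. \<bar>f a - g a\<bar> \<le> c"
  shows "\<bar>(MAX a. f a) - (MAX a. g a)\<bar> \<le> c"
proof -
  have bound: "(MAX a. f a) \<le> (MAX a. g a) + c" if "\<And>a. f a \<le> g a + c" for f g :: "'a \<Rightarrow> real"
  proof (rule Max.boundedI)
    fix y assume "y \<in> range f"
    then obtain a where "y = f a" by auto
    moreover have "g a \<le> (MAX a. g a)" by (rule Max_ge) auto
    ultimately show "y \<le> (MAX a. g a) + c" using that[of a] by linarith
  qed auto
  have le: "f a \<le> g a + c" "g a \<le> f a + c" for a
    using assms[of a] by (auto simp: abs_le_iff)
  have "(MAX a. f a) \<le> (MAX a. g a) + c" by (rule bound) (rule le)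
  moreover have "(MAX a. g a) \<le> (MAX a. f a) + c" by (rule bound) (rule le)
  ultimately show ?thesis by linarith
qed

lemma abs_Max_le:
  fixes f :: "'a::finite \<Rightarrow> real"
  assumes "\<And>a. \<bar>f a\<bar> \<le> c"
  shows "\<bar>(MAX a. f a)\<bar> \<le> c"
  using abs_Max_diff_le[of f "\<lambda>_. 0" c] assms by simp

lemma expectation_bind_pmf_finite:
  fixes h :: "'b \<Rightarrow> real"
  assumes "finite (set_pmf p)" "\<And>x. finite (set_pmf (f x))"
  shows "measure_pmf.expectation (p \<bind> f) h =
         measure_pmf.expectation p (\<lambda>x. measure_pmf.expectation (f x) h)"
  using assms by (subst pmf_expectation_bind[of "set_pmf p"])
    (auto simp: integral_measure_pmf_real[of "set_pmf p"] mult.commute)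

lemma expectation_mono_pmf_finite:
  fixes f g :: "'b \<Rightarrow> real"
  assumes "finite (set_pmf p)" "\<And>x. x \<in> set_pmf p \<Longrightarrow> f x \<le> g x"
  shows "measure_pmf.expectation p f \<le> measure_pmf.expectation p g"
  using assms
  by (intro integral_mono_AE) (auto simp: integrable_measure_pmf_finite AE_measure_pmf_iff)

lemma hoeffding_mgf_pmf_pos:
  fixes q :: "'b pmf" and f :: "'b \<Rightarrow> real"
  assumes "finite (set_pmf q)" "\<And>x. a \<le> f x \<and> f x \<le> b"
    and "measure_pmf.expectation q f = 0" "0 < l"
  shows "measure_pmf.expectation q (\<lambda>x. exp (l * f x)) \<le> exp (l^2 * (b - a)^2 / 8)"
proof -
  interpret interval_bounded_random_variable "measure_pmf q" f a b
    by unfold_locales (use assms in auto)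
  have "nn_integral q (\<lambda>x. ennreal (exp (l * f x))) =
        ennreal (measure_pmf.expectation q (\<lambda>x. exp (l * f x)))"
    using assms(1) by (intro nn_integral_eq_integral) (auto simp: integrable_measure_pmf_finite)
  moreover have "nn_integral q (\<lambda>x. ennreal (exp (l * f x))) \<le> ennreal (exp (l^2 * (b - a)^2 / 8))"
    using Hoeffdings_lemma_nn_integral[OF assms(4)] assms(3) by simp
  ultimately show ?thesis by (simp add: ennreal_le_iff)
qed

lemma hoeffding_mgf_pmf:
  fixes q :: "'b pmf" and f :: "'b \<Rightarrow> real"
  assumes "finite (set_pmf q)" "\<And>x. a \<le> f x \<and> f x \<le> b" "measure_pmf.expectation q f = 0"
  shows "measure_pmf.expectation q (\<lambda>x. exp (l * f x)) \<le> exp (l^2 * (b - a)^2 / 8)"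
proof (cases l "0 :: real" rule: linorder_cases)
  case less
  have "measure_pmf.expectation q (\<lambda>x. exp ((- l) * (- f x))) \<le> exp ((- l)^2 * (- a - - b)^2 / 8)"
    by (rule hoeffding_mgf_pmf_pos) (use assms less in auto)
  moreover have "(- a - - b)^2 = (b - a)^2" by (simp add: power2_commute)
  ultimately show ?thesis by simp
next
  case equal
  then show ?thesis by simp
next
  case greater
  then show ?thesis using assms by (intro hoeffding_mgf_pmf_pos)
qed

lemma half_le_ln:
  assumes "2 \<le> x"
  shows "1/2 \<le> ln (x :: real)"
proof -
  have "exp (1/2 :: real)^2 = exp 1" by (simp flip: exp_of_nat_mult)
  also have "\<dots> \<le> 2^2" using exp_le by simp
  finally have "exp (1/2 :: real) \<le> 2" by (rule power2_le_imp_le) simp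
  thus ?thesis using assms by (subst ln_ge_iff) auto
qed

lemma half_le_ln_of_nat: "2 \<le> n \<Longrightarrow> 1/2 \<le> ln (real n)"
  by (rule half_le_ln) simp

lemma two_le_exp_one: "2 \<le> exp (1 :: real)"
  using exp_ge_add_one_self[of 1] by simp

lemma ln_double_add_one_le:
  assumes "2 \<le> x"
  shows "ln (2 * x) + 1 \<le> 4 * ln (x :: real)"
proof -
  have "ln 2 \<le> ln x" "ln (2 * x) = ln 2 + ln x" using assms by (simp_all add: ln_mult)
  thus ?thesis using half_le_ln[of 2] half_le_ln[OF assms] by linarith
qed

lemma sq_le_exp_majorant:
  fixes V s c X :: real
  assumes "0 < V" "0 < s" "0 \<le> c" "V * s = c" "1 \<le> V * s^2" "0 \<le> X"
  shows "X^2 \<le> c^2 + 2 * V * exp (s * X - s * c)"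
proof (cases "X \<le> c")
  case True
  then have "X^2 \<le> c^2" using assms by (intro power_mono) auto
  moreover have "0 \<le> 2 * V * exp (s * X - s * c)" using assms by simp
  ultimately show ?thesis by linarith
next
  case False
  define y where "y = X - c"
  have y: "y > 0" using False y_def by simp
  have "1 + s * y + (s * y)^2 / 2 \<le> exp (s * y)"
    using y assms by (intro exp_lower_Taylor_quadratic) simp
  hence "2 * V * (1 + s * y + (s * y)^2 / 2) \<le> 2 * V * exp (s * y)" using assms by simp
  moreover have "2 * V * (1 + s * y + (s * y)^2 / 2) = 2 * V + 2 * c * y + (V * s^2) * y^2"
    by (simp add: algebra_simps power2_eq_square flip: assms(4))
  moreover have "y^2 \<le> (V * s^2) * y^2" using assms(5) mult_right_mono[of 1 "V * s^2" "y^2"] by simp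
  moreover have "X^2 = c^2 + 2 * c * y + y^2" by (simp add: y_def power2_eq_square algebra_simps)
  moreover have "s * X - s * c = s * y" by (simp add: y_def algebra_simps)
  ultimately show ?thesis using assms(1) by simp
qed

lemma exp_supnorm_le_sum:
  fixes N :: "'i::finite \<Rightarrow> real"
  assumes "0 \<le> s"
  shows "exp (s * supnorm N) \<le> (\<Sum>i\<in>UNIV. exp (s * N i) + exp (- s * N i))"
proof -
  obtain j where j: "supnorm N = \<bar>N j\<bar>" using supnorm_attained by blast
  have "exp (s * \<bar>N j\<bar>) \<le> exp (s * N j) + exp (- s * N j)"
    by (cases "N j \<ge> 0") (auto simp: add_increasing add_increasing2)
  also have "\<dots> \<le> (\<Sum>i\<in>UNIV. exp (s * N i) + exp (- s * N i))"
    by (rule member_le_sum) (auto intro: add_nonneg_nonneg)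
  finally show ?thesis using j by simp
qed

lemma supnorm_sq_le_exp_sum:
  fixes N :: "'i::finite \<Rightarrow> real"
  assumes "0 < V" "0 < s" "0 \<le> c" "V * s = c" "1 \<le> V * s^2"
  shows "(supnorm N)^2 \<le> c^2 + 2 * V * exp (- s * c) * (\<Sum>i\<in>UNIV. exp (s * N i) + exp (- s * N i))"
proof -
  have "(supnorm N)^2 \<le> c^2 + 2 * V * exp (s * supnorm N - s * c)"
    by (rule sq_le_exp_majorant) (use assms supnorm_nonneg in auto)
  also have "exp (s * supnorm N - s * c) = exp (- s * c) * exp (s * supnorm N)"
    by (simp add: exp_diff exp_minus field_simps)
  also have "\<dots> \<le> exp (- s * c) * (\<Sum>i\<in>UNIV. exp (s * N i) + exp (- s * N i))"
    using exp_supnorm_le_sum[of s N] assms(2) by simp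
  finally show ?thesis using assms(1) by (simp add: mult.assoc)
qed

text \<open>Take \<open>s = sqrt(2 log(2d)/V)\<close> and \<open>c = V s\<close> in the majorant above: the sum of the
  \<open>2d\<close> moment generating functions then contributes exactly \<open>2V\<close>.\<close>
lemma expectation_supnorm_sq_le_subgaussian:
  fixes p :: "'z pmf" and N :: "'z \<Rightarrow> 'i::finite \<Rightarrow> real"
  assumes fin: "finite (set_pmf p)" and V: "0 < V" and d: "2 \<le> CARD('i)"
    and mgf: "\<And>i t. measure_pmf.expectation p (\<lambda>z. exp (t * N z i)) \<le> exp (t^2 * V / 2)"
  shows "measure_pmf.expectation p (\<lambda>z. (supnorm (N z))^2) \<le> 2 * V * (ln (2 * real CARD('i)) + 1)"
proof -
  define d where "d = real CARD('i)"
  define L where "L = ln (2 * d)"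
  define s where "s = sqrt (2 * L / V)"
  define c where "c = sqrt (2 * V * L)"
  have d2: "2 \<le> d" using d by (simp add: d_def)
  have L1: "1 \<le> L" using half_le_ln[of 2] half_le_ln[OF d2] d2 by (simp add: L_def ln_mult)
  have s: "0 < s" "s^2 = 2 * L / V" using L1 V by (auto simp: s_def)
  have c: "0 \<le> c" "c^2 = 2 * V * L" using L1 V by (auto simp: c_def)
  have "(V * s)^2 = V * (V * s^2)" by (simp add: power2_eq_square algebra_simps)
  also have "\<dots> = c^2" using s(2) c(2) V by simp
  finally have Vs: "V * s = c" using power2_eq_iff_nonneg[of "V * s" c] V s(1) c(1) by simp
  have sV: "V * s^2 = 2 * L" using s(2) V by simp
  hence Vs2: "1 \<le> V * s^2" "s^2 * V / 2 = L" "s * c = 2 * L"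
    using L1 by (simp_all add: mult.commute) (simp add: power2_eq_square mult_ac flip: Vs)
  let ?F = "\<lambda>z. c^2 + 2 * V * exp (- s * c) * (\<Sum>i\<in>UNIV. exp (s * N z i) + exp (- s * N z i))"
  have "measure_pmf.expectation p (\<lambda>z. (supnorm (N z))^2) \<le> measure_pmf.expectation p ?F"
    by (rule expectation_mono_pmf_finite[OF fin supnorm_sq_le_exp_sum]) (use V s c Vs Vs2 in auto)
  also have "measure_pmf.expectation p ?F = c^2 + 2 * V * exp (- s * c) *
      (\<Sum>i\<in>UNIV. measure_pmf.expectation p (\<lambda>z. exp (s * N z i))
                  + measure_pmf.expectation p (\<lambda>z. exp ((- s) * N z i)))"
    using fin by (simp add: integrable_measure_pmf_finite Bochner_Integration.integral_sum
        prob_space.prob_space[OF prob_space_measure_pmf])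
  also have "\<dots> \<le> c^2 + 2 * V * exp (- s * c) * (\<Sum>i\<in>(UNIV :: 'i set). 2 * exp (s^2 * V / 2))"
  proof (intro add_left_mono mult_left_mono sum_mono)
    fix i
    show "measure_pmf.expectation p (\<lambda>z. exp (s * N z i))
          + measure_pmf.expectation p (\<lambda>z. exp ((- s) * N z i))
        \<le> 2 * exp (s^2 * V / 2)"
      using mgf[of s i] mgf[of "- s" i] by simp
  qed (use V in auto)
  also have "\<dots> = c^2 + 2 * V * (exp (- s * c) * (2 * d) * exp (s^2 * V / 2))"
    by (simp add: d_def)
  also have "exp (- s * c) * (2 * d) * exp (s^2 * V / 2) = 1"
  proof -
    have "exp (- s * c) * exp (s^2 * V / 2) = exp (- L)" using Vs2 by (simp flip: exp_add)
    moreover have "exp (- L) * (2 * d) = 1" using d2 by (simp add: L_def exp_minus)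
    ultimately show ?thesis by (simp add: mult_ac)
  qed
  finally show ?thesis using c by (simp add: L_def d_def algebra_simps)
qed

lemma sq_convex_combination_le:
  fixes a b t :: real
  assumes "0 \<le> t" "t \<le> 1"
  shows "(t * a + (1 - t) * b)^2 \<le> t * a^2 + (1 - t) * b^2"
proof -
  have "t * a^2 + (1 - t) * b^2 - (t * a + (1 - t) * b)^2 = t * (1 - t) * (a - b)^2"
    by (simp add: power2_eq_square algebra_simps)
  moreover have "0 \<le> t * (1 - t) * (a - b)^2" using assms by simp
  ultimately show ?thesis by linarith
qed

lemma sq_add3_le:
  fixes a b c :: real
  shows "(a + (b + c))^2 \<le> 3/2 * a^2 + 6 * b^2 + 6 * c^2"
proof -
  have "3/2 * a^2 + 6 * b^2 + 6 * c^2 - (a + (b + c))^2 = (a - 2 * (b + c))^2 / 2 + 3 * (b - c)^2"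
    by (simp add: power2_eq_square field_simps)
  moreover have "0 \<le> (a - 2 * (b + c))^2 / 2 + 3 * (b - c)^2" by simp
  ultimately show ?thesis by linarith
qed

lemma sq_power_one_sub_mult_le:
  fixes a e :: real
  assumes "0 \<le> a" "a \<le> 1"
  shows "((1 - a)^k * e)^2 \<le> e^2 * (1 - a / 2)^k"
proof -
  have "(1 - a)^2 \<le> 1 - a" using assms by (simp add: power2_eq_square mult_left_le_one_le)
  also have "\<dots> \<le> 1 - a / 2" using assms by simp
  finally have "((1 - a)^2)^k \<le> (1 - a / 2)^k" by (intro power_mono) simp_all
  moreover have "((1 - a)^k * e)^2 = e^2 * ((1 - a)^2)^k"
    by (simp flip: power_mult add: power_mult_distrib mult.commute)
  ultimately show ?thesis by (simp add: mult_left_mono)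
qed

lemma constant_variance_step:
  fixes e B x :: real
  assumes "0 \<le> e" "e \<le> 1" "x^2 \<le> B"
  shows "(1 - e)^2 * (e * B) + e^2 * x^2 \<le> e * B"
proof -
  have "e^2 * x^2 \<le> e^2 * B" using assms by (intro mult_left_mono) auto
  moreover have "(1 - e)^2 * (e * B) + e^2 * B = e * B - e * (1 - e) * (e * B)"
    by (simp add: power2_eq_square algebra_simps)
  moreover have "0 \<le> e * (1 - e) * (e * B)"
    using assms order_trans[OF zero_le_power2 assms(3)] by simp
  ultimately show ?thesis by linarith
qed

lemma sq_div_one_sub_sq_add_one_le:
  fixes \<beta> :: real
  assumes "0 \<le> \<beta>" "\<beta> < 1"
  shows "\<beta>^2 / (1 - \<beta>)^2 + 1 \<le> 2 / (1 - \<beta>)^2"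
proof -
  have "\<beta>^2 / (1 - \<beta>)^2 \<le> 1 / (1 - \<beta>)^2" "1 \<le> 1 / (1 - \<beta>)^2"
    using assms by (simp_all add: divide_right_mono power_le_one power_le_one_iff)
  moreover have "2 / (1 - \<beta>)^2 = 1 / (1 - \<beta>)^2 + 1 / (1 - \<beta>)^2" by simp
  ultimately show ?thesis by linarith
qed

lemma harmonic_variance_step:
  fixes n e B x :: real
  assumes "e \<le> n" "2 \<le> e" "0 \<le> B" "x^2 \<le> B"
  shows "(1 - e/n)^2 * (2 * e * B / n) + (e/n)^2 * x^2 \<le> 2 * e * B / (n + 1)"
proof -
  have n: "0 < n" using assms by linarith
  have a: "0 \<le> 1 - e/n" "1 - e/n \<le> 1" using assms n by (auto simp: field_simps)
  have "(1 - e/n)^2 * (2 * e * B / n) \<le> (1 - e/n) * (2 * e * B / n)"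
    using a assms n by (intro mult_right_mono) (auto simp: power2_eq_square mult_left_le_one_le)
  moreover have "(e/n)^2 * x^2 \<le> (e/n)^2 * B" using assms by (intro mult_left_mono) auto
  moreover have "(1 - e/n) * (2 * e * B / n) + (e/n)^2 * B = e * B * (2 * (n - e) + e) / n^2"
    using n by (simp add: field_simps power2_eq_square)
  moreover have "e * B * (2 * (n - e) + e) / n^2 \<le> 2 * e * B / (n + 1)"
  proof -
    have "2 * n \<le> e * n" using assms(2) n by (intro mult_right_mono) auto
    moreover have "(2 * (n - e) + e) * (n + 1) = 2 * n^2 + 2 * n - e * n - e"
      by (simp add: power2_eq_square algebra_simps)
    ultimately have "(2 * (n - e) + e) * (n + 1) \<le> 2 * n^2"
      using assms by linarith
    hence "e * B * ((2 * (n - e) + e) * (n + 1)) \<le> e * B * (2 * n^2)"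
      using assms by (intro mult_left_mono) auto
    thus ?thesis using n by (simp add: field_simps)
  qed
  ultimately show ?thesis by linarith
qed

lemma harmonic_recursion_step:
  fixes n g c :: real
  assumes "4 \<le> n" "0 \<le> g" "0 \<le> c" "c \<le> 3 * g"
  shows "(1 - 4/n) * (g/n) + c/n^2 \<le> g/(n + 1)"
proof -
  have n: "0 < n" using assms by linarith
  have "((n - 4) * g + c) * (n + 1) \<le> g * n^2"
    using mult_right_mono[OF assms(4), of "n + 1"] n assms
    by (simp add: power2_eq_square algebra_simps)
  hence "((n - 4) * g + c) / n^2 \<le> g / (n + 1)" using n by (simp add: field_simps)
  thus ?thesis using n by (simp add: field_simps power2_eq_square)
qed

lemma harmonic_bound_step:
  fixes n u B L \<beta> :: real
  assumes "4 \<le> n" "0 \<le> u" "0 \<le> B" "0 \<le> L" "\<beta>^2 \<le> 1"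
  defines "g \<equiv> 256 * u^3 * B * L"
  shows "(1 - 4/n) * (g/n) + (4 * u / n) * (\<beta>^2 * u) * (8 * (8 * u * B / n) * L) \<le> g/(n + 1)"
proof -
  have g: "0 \<le> g" using assms by (simp add: g_def)
  have "(4 * u / n) * (\<beta>^2 * u) * (8 * (8 * u * B / n) * L) = \<beta>^2 * g / n^2"
    using assms(1) by (simp add: g_def power2_eq_square power3_eq_cube field_simps)
  moreover have "\<beta>^2 * g \<le> 3 * g" using assms(5) g by (intro mult_right_mono) auto
  ultimately show ?thesis
    using harmonic_recursion_step[OF assms(1) g mult_nonneg_nonneg[OF zero_le_power2 g]] by simp
qed

lemma prod_one_sub_four_div_le:
  fixes K :: real
  assumes "4 \<le> K"
  shows "(\<Prod>j<k. 1 - 4 / (real j + K)) \<le> K / (real k + K)"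
proof (induction k)
  case (Suc k)
  define n where "n = real k + K"
  have n: "4 \<le> n" "0 \<le> 1 - 4/n" using assms by (auto simp: n_def field_simps)
  have "(\<Prod>j<Suc k. 1 - 4 / (real j + K)) \<le> K / n * (1 - 4/n)"
    using mult_right_mono[OF Suc.IH n(2)] by (simp add: n_def)
  also have "\<dots> \<le> K / (n + 1)"
    using mult_left_mono[OF harmonic_recursion_step[OF n(1), of 1 0]] assms
    by (simp add: field_simps)
  finally show ?case by (simp add: n_def add_ac)
qed (use assms in simp)

lemma sq_prod_one_sub_four_div_le:
  fixes K :: real
  assumes "4 \<le> K"
  shows "(\<Prod>j<k. 1 - 4 / (real j + K))^2 \<le> K / (real k + K)"
proof -
  have "0 \<le> (\<Prod>j<k. 1 - 4 / (real j + K))"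
    using assms by (intro prod_nonneg) (simp add: field_simps)
  moreover have "K / (real k + K) \<le> 1" using assms by simp
  ultimately have "(\<Prod>j<k. 1 - 4 / (real j + K))^2 \<le> (\<Prod>j<k. 1 - 4 / (real j + K))"
    using prod_one_sub_four_div_le[OF assms, of k]
    by (simp add: power2_eq_square mult_left_le_one_le)
  thus ?thesis using prod_one_sub_four_div_le[OF assms, of k] by linarith
qed

definition successors :: "('a::finite \<Rightarrow> 's::finite \<Rightarrow> 's pmf) \<Rightarrow> ('s \<times> 'a \<Rightarrow> 's) pmf" where
  "successors P = Pi_pmf UNIV undefined (\<lambda>(s, a). P a s)"

definition bellman_noise ::
  "('s::finite \<Rightarrow> 'a::finite \<Rightarrow> real) \<Rightarrow> real \<Rightarrow> ('s \<times> 'a \<Rightarrow> real) \<Rightarrow> ('s \<times> 'a \<Rightarrow> 's)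
   \<Rightarrow> ('s \<times> 'a \<Rightarrow> real)" where
  "bellman_noise R \<beta> Qs Y = (\<lambda>(s, a). R s a + \<beta> * (MAX a'. Qs (Y (s, a), a')) - Qs (s, a))"

text \<open>The state \<open>(Q, N, C)\<close> runs the Q-learning iterate \<open>Q\<close> together with the noise part
  \<open>N\<close> of \<open>Q - Q\<^sup>*\<close>, driven by the same successors, and a scalar \<open>C\<close> bounding the rest of
  \<open>Q - Q\<^sup>*\<close> beyond the decay of the initial error.\<close>
definition coupled_step ::
  "('s::finite \<Rightarrow> 'a::finite \<Rightarrow> real) \<Rightarrow> real \<Rightarrow> ('s \<times> 'a \<Rightarrow> real) \<Rightarrow> real
   \<Rightarrow> ('s \<times> 'a \<Rightarrow> real) \<times> ('s \<times> 'a \<Rightarrow> real) \<times> real \<Rightarrow> ('s \<times> 'a \<Rightarrow> 's)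
   \<Rightarrow> ('s \<times> 'a \<Rightarrow> real) \<times> ('s \<times> 'a \<Rightarrow> real) \<times> real" where
  "coupled_step R \<beta> Qs e z Y = (case z of (Q, N, C) \<Rightarrow>
     (qstep R \<beta> e Q Y, \<lambda>x. (1 - e) * N x + e * bellman_noise R \<beta> Qs Y x,
      (1 - e * (1 - \<beta>)) * C + e * \<beta> * supnorm N))"

primrec coupled_qlearn ::
  "('s::finite \<Rightarrow> 'a::finite \<Rightarrow> real) \<Rightarrow> ('a \<Rightarrow> 's \<Rightarrow> 's pmf) \<Rightarrow> real
   \<Rightarrow> ('s \<times> 'a \<Rightarrow> real) \<Rightarrow> (nat \<Rightarrow> real) \<Rightarrow> ('s \<times> 'a \<Rightarrow> real) \<Rightarrow> nat
   \<Rightarrow> (('s \<times> 'a \<Rightarrow> real) \<times> ('s \<times> 'a \<Rightarrow> real) \<times> real) pmf" where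
  "coupled_qlearn R P \<beta> Qs eps Q0 0 = return_pmf (Q0, \<lambda>_. 0, 0)"
| "coupled_qlearn R P \<beta> Qs eps Q0 (Suc k) =
     coupled_qlearn R P \<beta> Qs eps Q0 k \<bind> (\<lambda>z. map_pmf (coupled_step R \<beta> Qs (eps k) z) (successors P))"

context
  fixes R :: "'s::finite \<Rightarrow> 'a::finite \<Rightarrow> real" and P :: "'a \<Rightarrow> 's \<Rightarrow> 's pmf"
    and \<beta> :: real and Qs :: "'s \<times> 'a \<Rightarrow> real"
begin

lemma finite_set_successors: "finite (set_pmf (successors P))"
  by (rule finite_subset[of _ UNIV]) auto

lemma finite_set_coupled_qlearn: "finite (set_pmf (coupled_qlearn R P \<beta> Qs eps Q0 k))"
  by (induction k) (auto simp: finite_set_successors)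

lemma map_fst_coupled_qlearn: "map_pmf fst (coupled_qlearn R P \<beta> Qs eps Q0 k) = qlearn R P \<beta> eps Q0 k"
proof (induction k)
  case (Suc k)
  have "map_pmf fst (coupled_qlearn R P \<beta> Qs eps Q0 (Suc k)) =
        coupled_qlearn R P \<beta> Qs eps Q0 k \<bind> (\<lambda>z. map_pmf (qstep R \<beta> (eps k) (fst z)) (successors P))"
    by (simp add: map_bind_pmf pmf.map_comp o_def coupled_step_def case_prod_unfold)
  also have "\<dots> = map_pmf fst (coupled_qlearn R P \<beta> Qs eps Q0 k) \<bind>
                     (\<lambda>Q. map_pmf (qstep R \<beta> (eps k) Q) (successors P))"
    by (simp add: bind_map_pmf)
  also have "\<dots> = qlearn R P \<beta> eps Q0 (Suc k)"
    using Suc by (simp add: successors_def)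
  finally show ?case .
qed simp

lemma expectation_qlearn_eq_coupled:
  fixes f :: "_ \<Rightarrow> real"
  shows "measure_pmf.expectation (qlearn R P \<beta> eps Q0 k) f =
         measure_pmf.expectation (coupled_qlearn R P \<beta> Qs eps Q0 k) (\<lambda>z. f (fst z))"
  by (simp flip: map_fst_coupled_qlearn)

lemma expectation_coupled_qlearn_Suc:
  fixes h :: "_ \<Rightarrow> real"
  shows "measure_pmf.expectation (coupled_qlearn R P \<beta> Qs eps Q0 (Suc k)) h =
         measure_pmf.expectation (coupled_qlearn R P \<beta> Qs eps Q0 k)
           (\<lambda>z. measure_pmf.expectation (successors P) (\<lambda>Y. h (coupled_step R \<beta> Qs (eps k) z Y)))"
  by (simp add: expectation_bind_pmf_finite finite_set_coupled_qlearn finite_set_successors)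

lemma expectation_successors_component:
  fixes g :: "'s \<Rightarrow> real"
  shows "measure_pmf.expectation (successors P) (\<lambda>Y. g (Y (s, a))) = measure_pmf.expectation (P a s) g"
proof -
  have "map_pmf (\<lambda>Y. Y (s, a)) (successors P) = P a s"
    unfolding successors_def by (subst Pi_pmf_component) auto
  thus ?thesis by (metis integral_map_pmf)
qed

lemma coupled_step_deviation_le:
  fixes Q N :: "'s \<times> 'a \<Rightarrow> real" and C e :: real and Y :: "'s \<times> 'a \<Rightarrow> 's"
  assumes "0 \<le> \<beta>" "0 \<le> e" "e \<le> 1"
  defines "z' \<equiv> coupled_step R \<beta> Qs e (Q, N, C) Y"
  shows "supnorm (\<lambda>x. fst z' x - Qs x - fst (snd z') x) \<le>
         (1 - e * (1 - \<beta>)) * supnorm (\<lambda>x. Q x - Qs x - N x) + e * \<beta> * supnorm N"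
proof (rule supnorm_leI)
  fix x :: "'s \<times> 'a"
  obtain s a where x: "x = (s, a)" by (cases x)
  define y where "y = Y (s, a)"
  let ?D = "supnorm (\<lambda>x. Q x - Qs x - N x)"
  let ?X = "Q x - Qs x - N x" and ?Y = "(MAX a'. Q (y, a')) - (MAX a'. Qs (y, a'))"
  have X: "\<bar>?X\<bar> \<le> ?D"
    by (rule abs_le_supnorm[of "\<lambda>x. Q x - Qs x - N x", simplified])
  have "\<bar>?Y\<bar> \<le> supnorm (\<lambda>x. Q x - Qs x)"
    by (rule abs_Max_diff_le) (rule abs_le_supnorm[of "\<lambda>x. Q x - Qs x", simplified])
  hence Y: "\<bar>?Y\<bar> \<le> ?D + supnorm N" using supnorm_le_diff_add[of "\<lambda>x. Q x - Qs x" N] by simp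
  have "\<bar>fst z' x - Qs x - fst (snd z') x\<bar> = \<bar>(1 - e) * ?X + e * \<beta> * ?Y\<bar>"
    by (simp add: z'_def coupled_step_def qstep_def bellman_noise_def x y_def algebra_simps)
  also have "\<dots> \<le> (1 - e) * \<bar>?X\<bar> + e * \<beta> * \<bar>?Y\<bar>"
    using assms abs_triangle_ineq[of "(1 - e) * ?X" "e * \<beta> * ?Y"] by (simp add: abs_mult)
  also have "\<dots> \<le> (1 - e) * ?D + e * \<beta> * (?D + supnorm N)"
    using assms X Y by (intro add_mono mult_left_mono) auto
  also have "\<dots> = (1 - e * (1 - \<beta>)) * ?D + e * \<beta> * supnorm N"
    by (simp add: algebra_simps)
  finally show "\<bar>fst z' x - Qs x - fst (snd z') x\<bar> \<le> (1 - e * (1 - \<beta>)) * ?D + e * \<beta> * supnorm N" .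
qed

lemma coupled_qlearn_deviation_le:
  assumes "0 \<le> \<beta>" "\<beta> \<le> 1" and eps: "\<And>k. 0 \<le> eps k \<and> eps k \<le> 1"
    and "z \<in> set_pmf (coupled_qlearn R P \<beta> Qs eps Q0 k)"
  shows "supnorm (\<lambda>x. fst z x - Qs x - fst (snd z) x) \<le>
           (\<Prod>j<k. 1 - eps j * (1 - \<beta>)) * supnorm (\<lambda>x. Q0 x - Qs x) + snd (snd z)
         \<and> 0 \<le> snd (snd z)"
  using assms(4)
proof (induction k arbitrary: z)
  case (Suc k)
  then obtain Q N C Y where z0: "(Q, N, C) \<in> set_pmf (coupled_qlearn R P \<beta> Qs eps Q0 k)"
    and z: "z = coupled_step R \<beta> Qs (eps k) (Q, N, C) Y"
    by fastforce
  define \<rho> where "\<rho> = 1 - eps k * (1 - \<beta>)"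
  define A where "A = (\<Prod>j<k. 1 - eps j * (1 - \<beta>)) * supnorm (\<lambda>x. Q0 x - Qs x)"
  have IH: "supnorm (\<lambda>x. Q x - Qs x - N x) \<le> A + C" "0 \<le> C"
    using Suc.IH[OF z0] by (auto simp: A_def)
  have \<rho>: "0 \<le> \<rho>" "\<rho> \<le> 1" using eps[of k] assms(1,2) by (auto simp: \<rho>_def mult_le_one)
  have "supnorm (\<lambda>x. fst z x - Qs x - fst (snd z) x) \<le>
        \<rho> * supnorm (\<lambda>x. Q x - Qs x - N x) + eps k * \<beta> * supnorm N"
    unfolding z \<rho>_def by (rule coupled_step_deviation_le) (use assms eps in auto)
  also have "\<dots> \<le> \<rho> * A + (\<rho> * C + eps k * \<beta> * supnorm N)"
    using mult_left_mono[OF IH(1) \<rho>(1)] by (simp add: algebra_simps)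
  finally have "supnorm (\<lambda>x. fst z x - Qs x - fst (snd z) x)
      \<le> \<rho> * A + (\<rho> * C + eps k * \<beta> * supnorm N)" .
  moreover have "snd (snd z) = \<rho> * C + eps k * \<beta> * supnorm N"
    by (simp add: z coupled_step_def \<rho>_def)
  moreover have "\<rho> * A = (\<Prod>j<Suc k. 1 - eps j * (1 - \<beta>)) * supnorm (\<lambda>x. Q0 x - Qs x)"
    by (simp add: A_def \<rho>_def)
  moreover have "0 \<le> \<rho> * C + eps k * \<beta> * supnorm N"
    using \<rho> IH eps[of k] assms(1) supnorm_nonneg[of N] by simp
  ultimately show ?case by simp
qed simp

lemma bellman_noise_mean:
  assumes fixpoint: "bellman R P \<beta> Qs = Qs"
  shows "measure_pmf.expectation (successors P) (\<lambda>Y. bellman_noise R \<beta> Qs Y (s, a)) = 0"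
proof -
  define M where "M = (\<lambda>y. MAX a'. Qs (y, a'))"
  have "measure_pmf.expectation (successors P) (\<lambda>Y. bellman_noise R \<beta> Qs Y (s, a)) =
        measure_pmf.expectation (P a s) (\<lambda>y. R s a + \<beta> * M y - Qs (s, a))"
    by (simp add: bellman_noise_def M_def flip: expectation_successors_component)
  also have "\<dots> = (\<Sum>y\<in>UNIV. (R s a + \<beta> * M y - Qs (s, a)) * pmf (P a s) y)"
    by (subst integral_measure_pmf_real[of UNIV]) auto
  also have "\<dots> = (R s a - Qs (s, a)) * (\<Sum>y\<in>UNIV. pmf (P a s) y) + \<beta> * (\<Sum>y\<in>UNIV. pmf (P a s) y * M y)"
    by (simp add: algebra_simps sum.distrib sum_distrib_left sum_distrib_right sum_subtractf)
  also have "\<dots> = 0"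
    using fun_cong[OF fixpoint, of "(s, a)"] sum_pmf_eq_1[of UNIV "P a s"]
    by (simp add: bellman_def M_def)
  finally show ?thesis .
qed

lemma bellman_noise_mgf:
  assumes "0 \<le> \<beta>" "\<beta> \<le> 1" and fixpoint: "bellman R P \<beta> Qs = Qs"
  shows "measure_pmf.expectation (successors P) (\<lambda>Y. exp (t * bellman_noise R \<beta> Qs Y (s, a)))
           \<le> exp (t^2 * (supnorm Qs)^2 / 2)"
proof -
  define x where "x = supnorm Qs"
  define g where "g = (\<lambda>y. R s a + \<beta> * (MAX a'. Qs (y, a')) - Qs (s, a))"
  have "\<bar>MAX a'. Qs (y, a')\<bar> \<le> x" for y
    unfolding x_def by (rule abs_Max_le) (rule abs_le_supnorm)
  hence noise_bound: "\<bar>\<beta> * (MAX a'. Qs (y, a'))\<bar> \<le> \<beta> * x" for y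
    using assms(1) by (simp add: abs_mult mult_left_mono)
  have g_bounds: "R s a - \<beta> * x - Qs (s, a) \<le> g y \<and> g y \<le> R s a + \<beta> * x - Qs (s, a)" for y
    using noise_bound[of y, unfolded abs_le_iff] unfolding g_def by linarith
  have "measure_pmf.expectation (successors P) (\<lambda>Y. exp (t * bellman_noise R \<beta> Qs Y (s, a))) =
        measure_pmf.expectation (P a s) (\<lambda>y. exp (t * g y))"
    by (simp add: bellman_noise_def g_def flip: expectation_successors_component)
  also have "\<dots> \<le> exp (t^2 * (2 * (\<beta> * x))^2 / 8)"
  proof -
    have "measure_pmf.expectation (P a s) g = 0"
      using bellman_noise_mean[OF fixpoint, of s a]
      by (simp add: bellman_noise_def g_def flip: expectation_successors_component)
    then have "measure_pmf.expectation (P a s) (\<lambda>y. exp (t * g y))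
      \<le> exp (t^2 * ((R s a + \<beta> * x - Qs (s, a)) - (R s a - \<beta> * x - Qs (s, a)))^2 / 8)"
      by (intro hoeffding_mgf_pmf g_bounds) simp
    then show ?thesis by (simp add: algebra_simps)
  qed
  also have "\<dots> \<le> exp (t^2 * x^2 / 2)"
    using assms(1,2) supnorm_nonneg[of Qs]
    by (simp add: x_def power_mult_distrib mult_left_le_one_le power_le_one mult_left_mono)
  finally show ?thesis by (simp add: x_def)
qed

lemma coupled_qlearn_noise_mgf:
  assumes "0 \<le> \<beta>" "\<beta> \<le> 1" and fixpoint: "bellman R P \<beta> Qs = Qs"
    and V_nonneg: "0 \<le> V 0"
    and V_step: "\<And>k. (1 - eps k)^2 * V k + (eps k)^2 * (supnorm Qs)^2 \<le> V (Suc k)"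
  shows "measure_pmf.expectation (coupled_qlearn R P \<beta> Qs eps Q0 k) (\<lambda>z. exp (t * fst (snd z) i))
           \<le> exp (t^2 * V k / 2)"
proof (induction k arbitrary: t)
  case 0 then show ?case using V_nonneg by simp
next
  case (Suc k)
  obtain s a where i: "i = (s, a)" by (cases i)
  define \<alpha> where "\<alpha> = eps k"
  define c where "c = exp ((t * \<alpha>)^2 * (supnorm Qs)^2 / 2)"
  have "measure_pmf.expectation (coupled_qlearn R P \<beta> Qs eps Q0 (Suc k))
      (\<lambda>z. exp (t * fst (snd z) i)) =
    measure_pmf.expectation (coupled_qlearn R P \<beta> Qs eps Q0 k)
      (\<lambda>z. exp ((t * (1 - \<alpha>)) * fst (snd z) i) *
       measure_pmf.expectation (successors P) (\<lambda>Y. exp ((t * \<alpha>) * bellman_noise R \<beta> Qs Y (s, a))))"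
    by (subst expectation_coupled_qlearn_Suc)
       (simp add: coupled_step_def case_prod_unfold \<alpha>_def i distrib_left exp_add mult.assoc)
  also have "\<dots> \<le> measure_pmf.expectation (coupled_qlearn R P \<beta> Qs eps Q0 k)
                   (\<lambda>z. exp ((t * (1 - \<alpha>)) * fst (snd z) i) * c)"
    by (rule expectation_mono_pmf_finite[OF finite_set_coupled_qlearn])
       (simp add: c_def bellman_noise_mgf[OF assms(1-3)])
  also have "\<dots> = measure_pmf.expectation (coupled_qlearn R P \<beta> Qs eps Q0 k)
                   (\<lambda>z. exp ((t * (1 - \<alpha>)) * fst (snd z) i)) * c"
    by simp
  also have "\<dots> \<le> exp ((t * (1 - \<alpha>))^2 * V k / 2) * c"
    using Suc.IH[of "t * (1 - \<alpha>)"] by (simp add: c_def)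
  also have "\<dots> = exp (t^2 * ((1 - \<alpha>)^2 * V k + \<alpha>^2 * (supnorm Qs)^2) / 2)"
    by (simp add: c_def flip: exp_add) (simp add: power2_eq_square algebra_simps)
  also have "\<dots> \<le> exp (t^2 * V (Suc k) / 2)"
    using V_step[of k] by (simp add: \<alpha>_def mult_left_mono)
  finally show ?case .
qed

lemma coupled_qlearn_noise_sq:
  assumes "0 \<le> \<beta>" "\<beta> \<le> 1" and fixpoint: "bellman R P \<beta> Qs = Qs"
    and card: "2 \<le> CARD('s) * CARD('a)"
    and V_nonneg: "0 \<le> V 0" and V_pos: "0 < V k"
    and V_step: "\<And>k. (1 - eps k)^2 * V k + (eps k)^2 * (supnorm Qs)^2 \<le> V (Suc k)"
  shows "measure_pmf.expectation (coupled_qlearn R P \<beta> Qs eps Q0 k) (\<lambda>z. (supnorm (fst (snd z)))^2)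
           \<le> 8 * V k * ln (real (CARD('s) * CARD('a)))"
proof -
  have d: "2 \<le> real (CARD('s) * CARD('a))" using card by linarith
  have "measure_pmf.expectation (coupled_qlearn R P \<beta> Qs eps Q0 k) (\<lambda>z. (supnorm (fst (snd z)))^2)
          \<le> 2 * V k * (ln (2 * real CARD('s \<times> 'a)) + 1)"
    by (rule expectation_supnorm_sq_le_subgaussian[OF finite_set_coupled_qlearn V_pos _
          coupled_qlearn_noise_mgf[OF assms(1-3) V_nonneg V_step]]) (use card in simp)
  also have "\<dots> \<le> 2 * V k * (4 * ln (real (CARD('s) * CARD('a))))"
    using V_pos ln_double_add_one_le[OF d] by (intro mult_left_mono) simp_all
  finally show ?thesis by simp
qed

lemma coupled_qlearn_bound_sq:
  assumes "0 \<le> \<beta>" "\<beta> < 1" and eps: "\<And>k. 0 \<le> eps k \<and> eps k \<le> 1"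
    and H: "\<And>k. measure_pmf.expectation (coupled_qlearn R P \<beta> Qs eps Q0 k)
                  (\<lambda>z. (supnorm (fst (snd z)))^2) \<le> H k"
    and G_nonneg: "0 \<le> G 0"
    and G_step: "\<And>k. (1 - eps k * (1 - \<beta>)) * G k + eps k * \<beta>^2 / (1 - \<beta>) * H k \<le> G (Suc k)"
  shows "measure_pmf.expectation (coupled_qlearn R P \<beta> Qs eps Q0 k) (\<lambda>z. (snd (snd z))^2) \<le> G k"
proof (induction k)
  case 0 then show ?case using G_nonneg by simp
next
  case (Suc k)
  define \<rho> where "\<rho> = 1 - eps k * (1 - \<beta>)"
  define \<kappa> where "\<kappa> = eps k * \<beta>^2 / (1 - \<beta>)"
  let ?E = "measure_pmf.expectation (coupled_qlearn R P \<beta> Qs eps Q0 k)"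
  have \<rho>: "0 \<le> \<rho>" "\<rho> \<le> 1" using eps[of k] assms(1,2) by (auto simp: \<rho>_def mult_le_one)
  have \<kappa>: "0 \<le> \<kappa>" using eps[of k] assms(2) by (simp add: \<kappa>_def)
  \<comment> \<open>Jensen for the convex combination of \<open>C\<close> and \<open>\<beta> n / (1 - \<beta>)\<close> with weights \<open>\<rho>, 1 - \<rho>\<close>\<close>
  have convex: "(\<rho> * C + eps k * \<beta> * n)^2 \<le> \<rho> * C^2 + \<kappa> * n^2" for C n
  proof -
    have "(1 - \<rho>) * (\<beta> * n / (1 - \<beta>))^2 = eps k * (\<beta> * n)^2 * ((1 - \<beta>) / (1 - \<beta>)^2)"
      by (simp add: \<rho>_def power_divide mult_ac)
    also have "(1 - \<beta>) / (1 - \<beta>)^2 = 1 / (1 - \<beta>)"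
      using assms(2) by (simp add: power2_eq_square)
    finally have "(1 - \<rho>) * (\<beta> * n / (1 - \<beta>))^2 = \<kappa> * n^2"
      by (simp add: \<kappa>_def power_mult_distrib mult_ac)
    moreover have "\<rho> * C + eps k * \<beta> * n = \<rho> * C + (1 - \<rho>) * (\<beta> * n / (1 - \<beta>))"
      using assms(2) by (simp add: \<rho>_def field_simps)
    ultimately show ?thesis using sq_convex_combination_le[OF \<rho>] by metis
  qed
  have "measure_pmf.expectation (coupled_qlearn R P \<beta> Qs eps Q0 (Suc k)) (\<lambda>z. (snd (snd z))^2) =
        ?E (\<lambda>z. (\<rho> * snd (snd z) + eps k * \<beta> * supnorm (fst (snd z)))^2)"
    by (subst expectation_coupled_qlearn_Suc) (simp add: coupled_step_def case_prod_unfold \<rho>_def)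
  also have "\<dots> \<le> ?E (\<lambda>z. \<rho> * (snd (snd z))^2 + \<kappa> * (supnorm (fst (snd z)))^2)"
    by (rule expectation_mono_pmf_finite[OF finite_set_coupled_qlearn convex])
  also have "\<dots> = \<rho> * ?E (\<lambda>z. (snd (snd z))^2) + \<kappa> * ?E (\<lambda>z. (supnorm (fst (snd z)))^2)"
    by (simp add: integrable_measure_pmf_finite finite_set_coupled_qlearn)
  also have "\<dots> \<le> \<rho> * G k + \<kappa> * H k"
    using Suc.IH H[of k] \<rho> \<kappa> by (intro add_mono mult_left_mono) auto
  also have "\<dots> \<le> G (Suc k)" using G_step[of k] by (simp add: \<rho>_def \<kappa>_def)
  finally show ?case .
qed

lemma qlearn_error_sq_le:
  fixes eps V G :: "nat \<Rightarrow> real"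
  assumes "0 \<le> \<beta>" "\<beta> < 1" and fixpoint: "bellman R P \<beta> Qs = Qs"
    and card: "2 \<le> CARD('s) * CARD('a)"
    and eps: "\<And>k. 0 \<le> eps k \<and> eps k \<le> 1"
    and V_pos: "\<And>k. 0 < V k"
    and V_step: "\<And>k. (1 - eps k)^2 * V k + (eps k)^2 * (supnorm Qs)^2 \<le> V (Suc k)"
    and G_nonneg: "0 \<le> G 0"
    and G_step: "\<And>k. (1 - eps k * (1 - \<beta>)) * G k
                      + eps k * \<beta>^2 / (1 - \<beta>) * (8 * V k * ln (real (CARD('s) * CARD('a))))
                    \<le> G (Suc k)"
  shows "measure_pmf.expectation (qlearn R P \<beta> eps Q0 k) (\<lambda>Q. (supnorm (\<lambda>x. Q x - Qs x))^2)
     \<le> 3/2 * ((\<Prod>j<k. 1 - eps j * (1 - \<beta>)) * supnorm (\<lambda>x. Q0 x - Qs x))^2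
        + 6 * G k + 48 * V k * ln (real (CARD('s) * CARD('a)))"
proof -
  define A where "A = (\<Prod>j<k. 1 - eps j * (1 - \<beta>)) * supnorm (\<lambda>x. Q0 x - Qs x)"
  let ?E = "measure_pmf.expectation (coupled_qlearn R P \<beta> Qs eps Q0 k)"
  have noise: "measure_pmf.expectation (coupled_qlearn R P \<beta> Qs eps Q0 j)
                  (\<lambda>z. (supnorm (fst (snd z)))^2)
                \<le> 8 * V j * ln (real (CARD('s) * CARD('a)))" for j
    by (rule coupled_qlearn_noise_sq[where V = V])
       (use assms(1,2) fixpoint card V_pos V_step in \<open>auto intro: less_imp_le\<close>)
  have "measure_pmf.expectation (qlearn R P \<beta> eps Q0 k) (\<lambda>Q. (supnorm (\<lambda>x. Q x - Qs x))^2)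
        = ?E (\<lambda>z. (supnorm (\<lambda>x. fst z x - Qs x))^2)"
    by (rule expectation_qlearn_eq_coupled)
  also have "\<dots> \<le> ?E (\<lambda>z. 3/2 * A^2 + 6 * (snd (snd z))^2 + 6 * (supnorm (fst (snd z)))^2)"
  proof (rule expectation_mono_pmf_finite[OF finite_set_coupled_qlearn])
    fix z assume "z \<in> set_pmf (coupled_qlearn R P \<beta> Qs eps Q0 k)"
    from coupled_qlearn_deviation_le[OF _ _ eps this] assms(1,2)
    have "supnorm (\<lambda>x. fst z x - Qs x - fst (snd z) x) \<le> A + snd (snd z)" "0 \<le> snd (snd z)"
      by (auto simp: A_def)
    with supnorm_le_diff_add[of "\<lambda>x. fst z x - Qs x" "fst (snd z)"]
    have "(supnorm (\<lambda>x. fst z x - Qs x))^2 \<le> (A + (snd (snd z) + supnorm (fst (snd z))))^2"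
      by (intro power_mono) (auto simp: supnorm_nonneg)
    then show "(supnorm (\<lambda>x. fst z x - Qs x))^2 \<le>
        3/2 * A^2 + 6 * (snd (snd z))^2 + 6 * (supnorm (fst (snd z)))^2"
      using sq_add3_le by (rule order_trans)
  qed
  also have "\<dots> = 3/2 * A^2 + 6 * ?E (\<lambda>z. (snd (snd z))^2) + 6 * ?E (\<lambda>z. (supnorm (fst (snd z)))^2)"
    by (simp add: integrable_measure_pmf_finite finite_set_coupled_qlearn)
  also have "\<dots> \<le> 3/2 * A^2 + 6 * G k + 48 * V k * ln (real (CARD('s) * CARD('a)))"
    using coupled_qlearn_bound_sq[OF assms(1,2) eps noise G_nonneg G_step, of k] noise[of k]
    by linarith
  finally show ?thesis by (simp add: A_def)
qed

lemma qlearn_constant_step_le: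
  assumes "0 \<le> \<beta>" "\<beta> < 1" and fixpoint: "bellman R P \<beta> Qs = Qs"
    and card: "2 \<le> CARD('s) * CARD('a)" and "0 < \<epsilon>" "\<epsilon> \<le> 1"
  shows "measure_pmf.expectation (qlearn R P \<beta> (\<lambda>_. \<epsilon>) Q0 k) (\<lambda>Q. (supnorm (\<lambda>x. Q x - Qs x))^2)
     \<le> 3/2 * (supnorm (\<lambda>x. Q0 x - Qs x))^2 * (1 - (1 - \<beta>) * \<epsilon> / 2)^k
        + 96 * (1 + (supnorm Qs)^2) * \<epsilon> * ln (real (CARD('s) * CARD('a))) / (1 - \<beta>)^2"
proof -
  define B where "B = 1 + (supnorm Qs)^2"
  define L where "L = ln (real (CARD('s) * CARD('a)))"
  define H where "H = 8 * (\<epsilon> * B) * L"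
  define G where "G = \<beta>^2 / (1 - \<beta>)^2 * H"
  define e0 where "e0 = supnorm (\<lambda>x. Q0 x - Qs x)"
  have L: "1/2 \<le> L" unfolding L_def using half_le_ln_of_nat[OF card] by simp
  have H: "0 \<le> H" using L assms(5) by (simp add: H_def B_def)
  have G_step: "(1 - \<epsilon> * (1 - \<beta>)) * G + \<epsilon> * \<beta>^2 / (1 - \<beta>) * H \<le> G"
  proof -
    have "\<epsilon> * (1 - \<beta>) * G = \<epsilon> * \<beta>^2 / (1 - \<beta>) * H"
      using assms(2) by (simp add: G_def field_simps) (simp add: power2_eq_square algebra_simps)
    thus ?thesis by (simp add: algebra_simps)
  qed
  have main: "measure_pmf.expectation (qlearn R P \<beta> (\<lambda>_. \<epsilon>) Q0 k) (\<lambda>Q. (supnorm (\<lambda>x. Q x - Qs x))^2)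
     \<le> 3/2 * ((\<Prod>j<k. 1 - \<epsilon> * (1 - \<beta>)) * e0)^2 + 6 * G + 48 * (\<epsilon> * B) * L"
    unfolding e0_def L_def
  proof (rule qlearn_error_sq_le[where eps = "\<lambda>_. \<epsilon>" and V = "\<lambda>_. \<epsilon> * B" and G = "\<lambda>_. G",
        OF assms(1-4)])
    show "(1 - \<epsilon>)^2 * (\<epsilon> * B) + \<epsilon>^2 * (supnorm Qs)^2 \<le> \<epsilon> * B"
      using assms(5,6) by (intro constant_variance_step) (auto simp: B_def)
    show "(1 - \<epsilon> * (1 - \<beta>)) * G + \<epsilon> * \<beta>^2 / (1 - \<beta>)
            * (8 * (\<epsilon> * B) * ln (real (CARD('s) * CARD('a)))) \<le> G"
      using G_step by (simp add: H_def L_def)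
    have "0 < B" unfolding B_def by (intro add_pos_nonneg) auto
    thus "0 < \<epsilon> * B" using assms(5) by simp
  qed (use assms(5,6) H in \<open>auto simp: G_def\<close>)
  have "((1 - \<epsilon> * (1 - \<beta>))^k * e0)^2 \<le> e0^2 * (1 - \<epsilon> * (1 - \<beta>) / 2)^k"
    using assms(1,2,5,6) by (intro sq_power_one_sub_mult_le) (auto simp: mult_le_one)
  hence contraction: "3/2 * ((\<Prod>j<k. 1 - \<epsilon> * (1 - \<beta>)) * e0)^2
      \<le> 3/2 * e0^2 * (1 - (1 - \<beta>) * \<epsilon> / 2)^k"
    by (simp add: mult.commute[of \<epsilon>])
  have "6 * G + 48 * (\<epsilon> * B) * L = 6 * (H * (\<beta>^2 / (1 - \<beta>)^2 + 1))"
    by (simp add: G_def H_def algebra_simps)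
  also have "\<dots> \<le> 6 * (H * (2 / (1 - \<beta>)^2))"
    using sq_div_one_sub_sq_add_one_le[OF assms(1,2)] H by (intro mult_left_mono) auto
  also have "\<dots> = 96 * B * \<epsilon> * L / (1 - \<beta>)^2" by (simp add: H_def)
  finally have noise: "6 * G + 48 * (\<epsilon> * B) * L \<le> 96 * B * \<epsilon> * L / (1 - \<beta>)^2" .
  show ?thesis using main contraction noise unfolding e0_def B_def L_def by linarith
qed

lemma qlearn_constant_step_rate:
  assumes "0 \<le> \<beta>" "\<beta> < 1" and fixpoint: "bellman R P \<beta> Qs = Qs"
    and card: "2 \<le> CARD('s) * CARD('a)" and "0 < \<epsilon>"
    and step: "\<epsilon> \<le> (1 - \<beta>)^2 / (640 * exp 1 * ln (real (CARD('s) * CARD('a))))"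
  shows "measure_pmf.expectation (qlearn R P \<beta> (\<lambda>_. \<epsilon>) Q0 k) (\<lambda>Q. (supnorm (\<lambda>x. Q x - Qs x))^2)
     \<le> 3/2 * (supnorm (\<lambda>x. Q0 x - Qs x))^2 * (1 - (1 - \<beta>) * \<epsilon> / 2)^k
        + (1 + 2 * (supnorm Qs)^2) * (256 * exp 1 * ln (real (CARD('s) * CARD('a))) * \<epsilon>)
          / (1 - \<beta>)^2"
proof -
  define L where "L = ln (real (CARD('s) * CARD('a)))"
  define x where "x = supnorm Qs"
  have L: "1/2 \<le> L" unfolding L_def using half_le_ln_of_nat[OF card] by simp
  note e = two_le_exp_one
  have "1 \<le> exp 1 * L" using mult_mono[OF e L] by simp
  moreover have "(1 - \<beta>)^2 \<le> 1" using assms(1,2) by (simp add: power_le_one)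
  ultimately have "(1 - \<beta>)^2 / (640 * exp 1 * L) \<le> 1" using L by simp
  hence "\<epsilon> \<le> 1" using step[folded L_def] by linarith
  hence "measure_pmf.expectation (qlearn R P \<beta> (\<lambda>_. \<epsilon>) Q0 k) (\<lambda>Q. (supnorm (\<lambda>x. Q x - Qs x))^2)
     \<le> 3/2 * (supnorm (\<lambda>x. Q0 x - Qs x))^2 * (1 - (1 - \<beta>) * \<epsilon> / 2)^k
        + 96 * (1 + x^2) * \<epsilon> * L / (1 - \<beta>)^2"
    using qlearn_constant_step_le[OF assms(1-5)] by (simp add: L_def x_def)
  moreover have "96 * (1 + x^2) * \<epsilon> * L / (1 - \<beta>)^2
      \<le> (1 + 2 * x^2) * (256 * exp 1 * L * \<epsilon>) / (1 - \<beta>)^2"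
  proof -
    have "(1 + 2 * x^2) * 256 * 2 \<le> (1 + 2 * x^2) * 256 * exp 1"
      using e by (intro mult_left_mono) auto
    moreover have "96 * (1 + x^2) \<le> (1 + 2 * x^2) * 256 * 2"
      using zero_le_power2[of x] by (simp add: algebra_simps)
    ultimately have "96 * (1 + x^2) \<le> (1 + 2 * x^2) * 256 * exp 1" by linarith
    hence "96 * (1 + x^2) * (\<epsilon> * L) \<le> (1 + 2 * x^2) * 256 * exp 1 * (\<epsilon> * L)"
      using assms(5) L by (intro mult_right_mono) auto
    thus ?thesis by (intro divide_right_mono) (simp_all add: mult_ac)
  qed
  ultimately show ?thesis unfolding L_def x_def by linarith
qed

lemma qlearn_harmonic_step_error_le:
  assumes "0 \<le> \<beta>" "\<beta> < 1" and fixpoint: "bellman R P \<beta> Qs = Qs"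
    and card: "2 \<le> CARD('s) * CARD('a)" and K: "4 / (1 - \<beta>) \<le> K"
  defines "u \<equiv> 1 / (1 - \<beta>)"
  shows "measure_pmf.expectation (qlearn R P \<beta> (\<lambda>j. 4 * u / (real j + K)) Q0 k)
           (\<lambda>Q. (supnorm (\<lambda>x. Q x - Qs x))^2)
     \<le> 3/2 * ((\<Prod>j<k. 1 - 4 / (real j + K)) * supnorm (\<lambda>x. Q0 x - Qs x))^2
        + (1536 * u^3 + 384 * u) * (1 + (supnorm Qs)^2) * ln (real (CARD('s) * CARD('a)))
          / (real k + K)"
proof -
  define B where "B = 1 + (supnorm Qs)^2"
  define L where "L = ln (real (CARD('s) * CARD('a)))"
  define eps where "eps = (\<lambda>j::nat. 4 * u / (real j + K))"
  define V where "V = (\<lambda>j::nat. 8 * u * B / (real j + K))"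
  define g where "g = 256 * u^3 * B * L"
  have u: "1 \<le> u" "1 - \<beta> = 1 / u" using assms(1,2) by (simp_all add: u_def)
  have L: "1/2 \<le> L" unfolding L_def using half_le_ln_of_nat[OF card] by simp
  have B: "1 \<le> B" "(supnorm Qs)^2 \<le> B" by (simp_all add: B_def)
  have K4: "4 * u \<le> K" using K by (simp add: u_def)
  hence K4: "4 * u \<le> K" "4 \<le> K" using u(1) by linarith+
  have eps: "0 \<le> eps j \<and> eps j \<le> 1" "eps j * (1 - \<beta>) = 4 / (real j + K)" for j
    using K4 u by (auto simp: eps_def field_simps)
  have G_step: "(1 - eps j * (1 - \<beta>)) * (g / (real j + K))
      + eps j * \<beta>^2 / (1 - \<beta>) * (8 * V j * ln (real (CARD('s) * CARD('a))))
      \<le> g / (real (Suc j) + K)" for j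
  proof -
    define n where "n = real j + K"
    have "(1 - eps j * (1 - \<beta>)) * (g / n) + eps j * \<beta>^2 / (1 - \<beta>) * (8 * V j * L)
        = (1 - 4/n) * (g/n) + (4 * u / n) * (\<beta>^2 * u) * (8 * (8 * u * B / n) * L)"
      using u(1) by (simp add: eps(2) n_def eps_def V_def u(2))
    also have "\<dots> \<le> g / (n + 1)"
      unfolding g_def using K4 u B L assms(1,2) power_le_one[of \<beta> 2]
      by (intro harmonic_bound_step) (auto simp: n_def)
    finally show ?thesis by (simp add: n_def L_def add_ac)
  qed
  have main: "measure_pmf.expectation (qlearn R P \<beta> eps Q0 k) (\<lambda>Q. (supnorm (\<lambda>x. Q x - Qs x))^2)
     \<le> 3/2 * ((\<Prod>j<k. 1 - eps j * (1 - \<beta>)) * supnorm (\<lambda>x. Q0 x - Qs x))^2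
        + 6 * (g / (real k + K)) + 48 * V k * L"
    unfolding L_def
  proof (rule qlearn_error_sq_le[where G = "\<lambda>j. g / (real j + K)", OF assms(1-4) eps(1)])
    show "(1 - eps j)^2 * V j + (eps j)^2 * (supnorm Qs)^2 \<le> V (Suc j)" for j
      using harmonic_variance_step[of "4 * u" "real j + K" B "supnorm Qs"] K4 u B
      by (simp add: eps_def V_def add_ac)
  qed (use K4 u B L G_step in \<open>auto simp: V_def g_def\<close>)
  have "(\<Prod>j<k. 1 - eps j * (1 - \<beta>)) = (\<Prod>j<k. 1 - 4 / (real j + K))" by (simp add: eps(2))
  with main have "measure_pmf.expectation (qlearn R P \<beta> eps Q0 k) (\<lambda>Q. (supnorm (\<lambda>x. Q x - Qs x))^2)
     \<le> 3/2 * ((\<Prod>j<k. 1 - 4 / (real j + K)) * supnorm (\<lambda>x. Q0 x - Qs x))^2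
        + 6 * (g / (real k + K)) + 48 * V k * L"
    by (simp only:)
  moreover have "6 * (g / (real k + K)) + 48 * V k * L
      = (1536 * u^3 + 384 * u) * B * L / (real k + K)"
    by (simp add: g_def V_def add_divide_distrib algebra_simps)
  ultimately show ?thesis unfolding eps_def B_def L_def by linarith
qed

lemma qlearn_harmonic_step_le:
  assumes "0 \<le> \<beta>" "\<beta> < 1" and fixpoint: "bellman R P \<beta> Qs = Qs"
    and card: "2 \<le> CARD('s) * CARD('a)" and K: "4 / (1 - \<beta>) \<le> K"
  shows "measure_pmf.expectation (qlearn R P \<beta> (\<lambda>j. 4 / (1 - \<beta>) / (real j + K)) Q0 k)
           (\<lambda>Q. (supnorm (\<lambda>x. Q x - Qs x))^2)
     \<le> (3/2 * K * (supnorm (\<lambda>x. Q0 x - Qs x))^2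
         + 1920 * (1 + (supnorm Qs)^2) * ln (real (CARD('s) * CARD('a))) / (1 - \<beta>)^3) / (real k + K)"
proof -
  define u where "u = 1 / (1 - \<beta>)"
  define B where "B = 1 + (supnorm Qs)^2"
  define L where "L = ln (real (CARD('s) * CARD('a)))"
  define e0 where "e0 = supnorm (\<lambda>x. Q0 x - Qs x)"
  have u: "1 \<le> u" using assms(1,2) by (simp add: u_def)
  have K4: "4 \<le> K" using K u by (simp add: u_def)
  have "0 \<le> L" unfolding L_def using half_le_ln_of_nat[OF card] by linarith
  hence BL: "0 \<le> B * L" by (intro mult_nonneg_nonneg) (simp_all add: B_def)
  have "u * 1 \<le> u * u^2" using one_le_power[OF u, of 2] u by (intro mult_left_mono) auto
  hence "384 * u * (B * L) \<le> 384 * u^3 * (B * L)"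
    using BL by (intro mult_right_mono) (simp_all add: power2_eq_square power3_eq_cube)
  hence noise: "(1536 * u^3 + 384 * u) * B * L / (real k + K) \<le> 1920 * u^3 * B * L / (real k + K)"
    using K4 by (intro divide_right_mono) (simp_all add: algebra_simps)
  have "((\<Prod>j<k. 1 - 4 / (real j + K)) * e0)^2 = (\<Prod>j<k. 1 - 4 / (real j + K))^2 * e0^2"
    by (simp add: power_mult_distrib)
  also have "\<dots> \<le> K / (real k + K) * e0^2"
    using sq_prod_one_sub_four_div_le[OF K4, of k] by (rule mult_right_mono) simp
  finally have contraction:
      "3/2 * ((\<Prod>j<k. 1 - 4 / (real j + K)) * e0)^2 \<le> 3/2 * (K / (real k + K) * e0^2)"
    by linarith
  have "(3/2 * K * e0^2 + 1920 * B * L / (1 - \<beta>)^3) / (real k + K)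
      = 3/2 * (K / (real k + K) * e0^2) + 1920 * u^3 * B * L / (real k + K)"
    by (simp add: u_def power_one_over add_divide_distrib)
  moreover have "(\<lambda>j. 4 / (1 - \<beta>) / (real j + K)) = (\<lambda>j. 4 * u / (real j + K))" by (simp add: u_def)
  ultimately show ?thesis
    using qlearn_harmonic_step_error_le[OF assms, of Q0 k] noise contraction
    unfolding u_def[symmetric] e0_def[symmetric] B_def[symmetric] L_def[symmetric] by simp
qed

lemma qlearn_harmonic_step_rate:
  assumes "0 \<le> \<beta>" "\<beta> < 1" and fixpoint: "bellman R P \<beta> Qs = Qs"
    and card: "2 \<le> CARD('s) * CARD('a)"
  defines "K \<equiv> 640 * exp 1 * ln (real (CARD('s) * CARD('a))) / (1 - \<beta>)^3"
  shows "measure_pmf.expectation (qlearn R P \<beta> (\<lambda>j. 4 / (1 - \<beta>) / (real j + K)) Q0 k)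
           (\<lambda>Q. (supnorm (\<lambda>x. Q x - Qs x))^2)
     \<le> 8192 * (exp 1)^2 * (1 + 2 * (supnorm Qs)^2 + (supnorm (\<lambda>x. Q0 x - Qs x))^2)
        * (ln (real (CARD('s) * CARD('a))) / (1 - \<beta>)^3) * (1 / (real k + K))"
proof -
  define Y where "Y = ln (real (CARD('s) * CARD('a))) / (1 - \<beta>)^3"
  define x where "x = supnorm Qs"
  define e0 where "e0 = supnorm (\<lambda>x. Q0 x - Qs x)"
  have L: "1/2 \<le> ln (real (CARD('s) * CARD('a)))" using half_le_ln_of_nat[OF card] by simp
  note e = two_le_exp_one
  have b: "0 < 1 - \<beta>" "(1 - \<beta>)^3 \<le> 1 - \<beta>" using assms(1,2)
    by (simp_all add: power3_eq_cube mult_le_one mult_left_le_one_le)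
  have "1 / (1 - \<beta>) \<le> 1 / (1 - \<beta>)^3"
    using b by (intro divide_left_mono) (auto simp: mult_pos_pos)
  also have "\<dots> \<le> 2 * Y" using L b by (simp add: Y_def divide_right_mono)
  finally have Y: "0 \<le> Y" "1 / (1 - \<beta>) \<le> 2 * Y"
    using divide_nonneg_pos[OF _ zero_less_power[OF b(1)], of "ln (real (CARD('s) * CARD('a)))" 3] L
    unfolding Y_def by linarith+
  have "8 * Y \<le> 640 * exp 1 * Y" using e Y by (intro mult_right_mono) auto
  hence K: "K = 640 * exp 1 * Y" "4 / (1 - \<beta>) \<le> K" using Y by (simp_all add: K_def Y_def)
  have e2: "2 * exp 1 \<le> (exp 1 :: real)^2"
    using mult_right_mono[OF e, of "exp 1"] by (simp add: power2_eq_square)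
  have "960 * exp 1 * (Y * e0^2) \<le> 8192 * (exp 1)^2 * (Y * e0^2)"
    using e e2 Y by (intro mult_right_mono) auto
  moreover have "1920 * (1 + x^2) * Y \<le> 8192 * (exp 1)^2 * (1 + 2 * x^2) * Y"
    using e e2 Y by (intro mult_right_mono mult_mono) auto
  ultimately have bound: "3/2 * K * e0^2 + 1920 * (1 + x^2) * Y
      \<le> 8192 * (exp 1)^2 * (1 + 2 * x^2 + e0^2) * Y"
    by (simp add: K(1) algebra_simps)
  have "measure_pmf.expectation (qlearn R P \<beta> (\<lambda>j. 4 / (1 - \<beta>) / (real j + K)) Q0 k)
          (\<lambda>Q. (supnorm (\<lambda>x. Q x - Qs x))^2)
      \<le> (3/2 * K * e0^2 + 1920 * (1 + x^2) * Y) / (real k + K)"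
    using qlearn_harmonic_step_le[OF assms(1-4) K(2), of Q0 k] by (simp add: Y_def x_def e0_def)
  also have "\<dots> \<le> 8192 * (exp 1)^2 * (1 + 2 * x^2 + e0^2) * Y / (real k + K)"
    using bound K Y by (intro divide_right_mono) auto
  finally show ?thesis by (simp add: Y_def x_def e0_def)
qed

end

theorem theorem5:
  fixes R :: "'s::finite \<Rightarrow> 'a::finite \<Rightarrow> real"
    and P :: "'a \<Rightarrow> 's \<Rightarrow> 's pmf"
    and \<beta> :: real
    and Q0 Qs :: "'s \<times> 'a \<Rightarrow> real"
  assumes R_bounds: "\<And>s a. 0 \<le> R s a \<and> R s a \<le> 1"
    and beta: "0 < \<beta>" "\<beta> < 1"
    and card: "CARD('s) * CARD('a) \<ge> 2"
    and fixpoint: "bellman R P \<beta> Qs = Qs"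
  shows
    "(\<forall>\<epsilon>::real. 0 < \<epsilon> \<longrightarrow>
        \<epsilon> \<le> (1 - \<beta>)^2 / (640 * exp 1 * ln (real (CARD('s) * CARD('a)))) \<longrightarrow>
        (\<forall>k. measure_pmf.expectation (qlearn R P \<beta> (\<lambda>_. \<epsilon>) Q0 k)
                (\<lambda>Q. (supnorm (\<lambda>x. Q x - Qs x))^2)
             \<le> 3/2 * (supnorm (\<lambda>x. Q0 x - Qs x))^2 * (1 - (1 - \<beta>) * \<epsilon> / 2)^k
               + (1 + 2 * (supnorm Qs)^2) * (256 * exp 1 * ln (real (CARD('s) * CARD('a))) * \<epsilon>)
                 / (1 - \<beta>)^2))
     \<and>
     (let \<epsilon> = 4 / (1 - \<beta>);
          K = 640 * exp 1 * ln (real (CARD('s) * CARD('a))) / (1 - \<beta>)^3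
      in \<forall>k. measure_pmf.expectation (qlearn R P \<beta> (\<lambda>j. \<epsilon> / (real j + K)) Q0 k)
                (\<lambda>Q. (supnorm (\<lambda>x. Q x - Qs x))^2)
             \<le> 8192 * (exp 1)^2 * (1 + 2 * (supnorm Qs)^2 + (supnorm (\<lambda>x. Q0 x - Qs x))^2)
               * (ln (real (CARD('s) * CARD('a))) / (1 - \<beta>)^3) * (1 / (real k + K)))"
  using qlearn_constant_step_rate[OF less_imp_le[OF beta(1)] beta(2) fixpoint card]
    qlearn_harmonic_step_rate[OF less_imp_le[OF beta(1)] beta(2) fixpoint card]
  by (simp add: Let_def)

end
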